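(* Let $\psi_f(G)$ denote the minimum weight of a fractional weak hyperclique-cover of a directed hypergraph $G$. Every directed hypergraph $G$ satisfies $\beta(G)\le\psi_f(G)$.
   Context: A directed hypergraph instance consists of vertices (messages) $V=[n]$ and receivers $j=1,\dots,m$, each given by a pair $(N(j),f(j))$ with $f(j)\in[n]$ and $N(j)\subseteq[n]\setminus\{f(j)\}$; it is the index coding problem in which a server holds $x_1,\dots,x_n\in\Sigma$ ($|\Sigma|>1$) and receiver $j$ wants $x_{f(j)}$ and knows $(x_i)_{i\in N(j)}$. A solution is an encoding $\mathcal{E}:\Sigma^n\to\Sigma_P$ such that each receiver $j$ can determine $x_{f(j)}$ from $\mathcal{E}(x_1,\dots,x_n)$ and its side information for all message values; $\beta_t(G)$ is the minimum of $\lceil\log_2|\Sigma_P|\rceil$ over solutions with $|\Sigma|=2^t$, and $\beta(G)=\inf_t\beta_t(G)/t$. A weak hyperclique is a set $\mathcal{J}$ of receivers such that for every pair of distinct $i,j\in\mathcal{J}$, $f(i)\in N(j)$. A fractional weak hyperclique-cover assigns a nonnegative weight to each weak hyperclique so that for every receiver $j$ the total weight of weak hypercliques containing $j$ is at least $1$; its weight is the sum of all weights. *)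

theory Defs
  imports Complex_Main
begin

text \<open>A directed hypergraph instance: vertices (messages) are 0..<n, receivers are 0..<m;
  receiver j wants message f j and knows the messages in N j.\<close>
definition dir_hypergraph :: "nat \<Rightarrow> nat \<Rightarrow> (nat \<Rightarrow> nat set) \<Rightarrow> (nat \<Rightarrow> nat) \<Rightarrow> bool" where
  "dir_hypergraph n m N f \<longleftrightarrow> (\<forall>j<m. f j < n \<and> N j \<subseteq> {..<n} - {f j})"

definition msgs :: "nat \<Rightarrow> nat \<Rightarrow> (nat \<Rightarrow> nat) set" where
  "msgs n t = {x. (\<forall>i<n. x i < 2 ^ t) \<and> (\<forall>i\<ge>n. x i = 0)}"

definition ic_solution ::
  "nat \<Rightarrow> nat \<Rightarrow> (nat \<Rightarrow> nat set) \<Rightarrow> (nat \<Rightarrow> nat) \<Rightarrow> nat \<Rightarrow> ((nat \<Rightarrow> nat) \<Rightarrow> nat) \<Rightarrow> nat set \<Rightarrow> bool" where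
  "ic_solution n m N f t E P \<longleftrightarrow> finite P \<and> (\<forall>x\<in>msgs n t. E x \<in> P) \<and>
     (\<forall>j<m. \<exists>D :: nat \<Rightarrow> (nat \<Rightarrow> nat) \<Rightarrow> nat.
        \<forall>x\<in>msgs n t. D (E x) (\<lambda>i. if i \<in> N j then x i else 0) = x (f j))"

definition beta_t :: "nat \<Rightarrow> nat \<Rightarrow> (nat \<Rightarrow> nat set) \<Rightarrow> (nat \<Rightarrow> nat) \<Rightarrow> nat \<Rightarrow> nat" where
  "beta_t n m N f t = Inf {nat \<lceil>log 2 (real (card P))\<rceil> | E P. ic_solution n m N f t E P}"

definition beta :: "nat \<Rightarrow> nat \<Rightarrow> (nat \<Rightarrow> nat set) \<Rightarrow> (nat \<Rightarrow> nat) \<Rightarrow> real" where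
  "beta n m N f = (INF t\<in>{1..}. real (beta_t n m N f t) / real t)"

definition weak_hyperclique :: "nat \<Rightarrow> (nat \<Rightarrow> nat set) \<Rightarrow> (nat \<Rightarrow> nat) \<Rightarrow> nat set \<Rightarrow> bool" where
  "weak_hyperclique m N f J \<longleftrightarrow> J \<subseteq> {..<m} \<and> (\<forall>i\<in>J. \<forall>j\<in>J. i \<noteq> j \<longrightarrow> f i \<in> N j)"

definition weak_hypercliques :: "nat \<Rightarrow> (nat \<Rightarrow> nat set) \<Rightarrow> (nat \<Rightarrow> nat) \<Rightarrow> nat set set" where
  "weak_hypercliques m N f = {J. weak_hyperclique m N f J}"

definition frac_whc_cover :: "nat \<Rightarrow> (nat \<Rightarrow> nat set) \<Rightarrow> (nat \<Rightarrow> nat) \<Rightarrow> (nat set \<Rightarrow> real) \<Rightarrow> bool" where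
  "frac_whc_cover m N f w \<longleftrightarrow> (\<forall>J\<in>weak_hypercliques m N f. w J \<ge> 0) \<and>
     (\<forall>j<m. (\<Sum>J\<in>{J\<in>weak_hypercliques m N f. j \<in> J}. w J) \<ge> 1)"

definition psi_f :: "nat \<Rightarrow> nat \<Rightarrow> (nat \<Rightarrow> nat set) \<Rightarrow> (nat \<Rightarrow> nat) \<Rightarrow> real" where
  "psi_f n m N f = Inf {(\<Sum>J\<in>weak_hypercliques m N f. w J) | w. frac_whc_cover m N f w}"

end

theory Submission
  imports Defs
begin

text \<open>Let \<open>w\<close> be a fractional weak hyperclique-cover and \<open>b \<ge> 1\<close>. Rounding \<open>b \<cdot> w J\<close> up
  gives integer multiplicities \<open>k J\<close> covering every receiver at least \<open>b\<close> times. Split each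
  message into \<open>b\<close> bits and label each slot \<open>(J, r)\<close>, \<open>r < k J\<close>, separately for every
  \<open>j \<in> J\<close> with a bit position of \<open>x (f j)\<close>, so that every position occurs; the code sends,
  for each slot, the parity of the labelled bits of the members of \<open>J\<close>. In a weak hyperclique
  every receiver knows the wanted messages of all other members, so it reads off its own bit
  from the parity. This uses \<open>\<Sum> k J \<le> b \<cdot> \<Sum> w J + |W|\<close> bits per \<open>b\<close> message bits, and
  letting \<open>b \<rightarrow> \<infinity>\<close> gives \<open>\<beta> \<le> \<Sum> w J\<close>.\<close>

lemma decoder_exists_if_determined:
  assumes "\<forall>x\<in>M. \<forall>y\<in>M. E x = E y \<and> (\<forall>i\<in>K. x i = y i) \<longrightarrow> x v = y v"
  shows "\<exists>D :: 'c \<Rightarrow> ('a \<Rightarrow> 'b::zero) \<Rightarrow> 'b. \<forall>x\<in>M. D (E x) (\<lambda>i. if i \<in> K then x i else 0) = x v"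
proof -
  let ?side = "\<lambda>x i. if i \<in> K then x i else 0"
  define D where "D = (\<lambda>p s. (SOME y. y \<in> M \<and> E y = p \<and> ?side y = s) v)"
  have "D (E x) (?side x) = x v" if x: "x \<in> M" for x
  proof -
    let ?P = "\<lambda>y. y \<in> M \<and> E y = E x \<and> ?side y = ?side x"
    define y where "y = (SOME y. ?P y)"
    have y: "?P y" unfolding y_def using someI[of ?P x] x by simp
    then have "\<forall>i\<in>K. y i = x i" by (metis (no_types, lifting))
    with y x assms have "y v = x v" by blast
    thus ?thesis unfolding D_def y_def by simp
  qed
  thus ?thesis by blast
qed

lemma nat_eq_if_low_bits_eq:
  fixes a a' :: nat
  assumes "a < 2 ^ b" "a' < 2 ^ b" "\<forall>q<b. bit a q = bit a' q"
  shows "a = a'"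
proof -
  have "take_bit b a = a" "take_bit b a' = a'"
    using assms(1,2) take_bit_nat_eq_self_iff by auto
  then have "bit a q = bit a' q" for q
    using assms(3) by (metis bit_take_bit_iff)
  thus ?thesis by (simp add: bit_eq_iff)
qed

lemma nat_ceiling_log2_le:
  assumes "p \<le> 2 ^ D" "p \<noteq> 0"
  shows "nat \<lceil>log 2 (real p)\<rceil> \<le> D"
proof -
  have "log 2 (real p) \<le> log 2 (2 ^ D)"
    using assms by (subst log_le_cancel_iff) (auto simp flip: of_nat_power)
  also have "\<dots> = real D" by (simp add: log_nat_power)
  finally show ?thesis by (simp add: nat_le_iff ceiling_le_iff)
qed

lemma beta_le_beta_t_div:
  assumes "t \<ge> 1"
  shows "beta n m N f \<le> real (beta_t n m N f t) / real t"
  unfolding beta_def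
  by (rule cINF_lower) (use assms in \<open>auto intro!: bdd_belowI2[where m=0]\<close>)

lemma beta_t_le_card_if_decodable_set_code:
  assumes "finite Dom" and C_sub: "\<forall>x\<in>msgs n t. C x \<subseteq> Dom"
    and decodable: "\<forall>j<m. \<forall>x\<in>msgs n t. \<forall>y\<in>msgs n t.
                      C x = C y \<and> (\<forall>i\<in>N j. x i = y i) \<longrightarrow> x (f j) = y (f j)"
  shows "beta_t n m N f t \<le> card Dom"
proof -
  define S where "S = C ` msgs n t"
  have "S \<subseteq> Pow Dom" using C_sub unfolding S_def by auto
  then have "finite S" and card_S: "card S \<le> 2 ^ card Dom"
    using \<open>finite Dom\<close> card_mono[of "Pow Dom" S] by (auto simp: card_Pow finite_subset)
  obtain h where h: "bij_betw h S {0..<card S}"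
    using ex_bij_betw_finite_nat \<open>finite S\<close> by blast
  then have inj_h: "inj_on h S" by (rule bij_betw_imp_inj_on)
  define E where "E = (\<lambda>x. h (C x))"
  define P where "P = E ` msgs n t"
  have "P = h ` S" unfolding P_def E_def S_def by auto
  then have "finite P" and card_P: "card P = card S"
    using \<open>finite S\<close> inj_h card_image by auto
  have "(\<lambda>_. 0) \<in> msgs n t" unfolding msgs_def by simp
  then have "card P \<noteq> 0" using \<open>finite P\<close> unfolding P_def by auto
  have "ic_solution n m N f t E P"
    unfolding ic_solution_def
  proof (intro conjI ballI allI impI)
    fix j assume "j < m"
    have "x (f j) = y (f j)"
      if "x \<in> msgs n t" "y \<in> msgs n t" "E x = E y" "\<forall>i\<in>N j. x i = y i" for x y
    proof -
      have "C x = C y"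
        using that inj_h unfolding E_def S_def by (auto simp: inj_on_eq_iff)
      thus ?thesis using decodable \<open>j < m\<close> that by blast
    qed
    then show "\<exists>D. \<forall>x\<in>msgs n t. D (E x) (\<lambda>i. if i \<in> N j then x i else 0) = x (f j)"
      by (intro decoder_exists_if_determined) blast
  qed (use \<open>finite P\<close> P_def in auto)
  then have "beta_t n m N f t \<le> nat \<lceil>log 2 (real (card P))\<rceil>"
    unfolding beta_t_def by (intro cInf_lower) auto
  also have "\<dots> \<le> card Dom"
    using nat_ceiling_log2_le card_S card_P \<open>card P \<noteq> 0\<close> by simp
  finally show ?thesis .
qed

lemma finite_weak_hypercliques: "finite (weak_hypercliques m N f)"
proof -
  have "weak_hypercliques m N f \<subseteq> Pow {..<m}"
    unfolding weak_hypercliques_def weak_hyperclique_def by auto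
  thus ?thesis using finite_subset by blast
qed

lemma singleton_weak_hyperclique: "j < m \<Longrightarrow> {j} \<in> weak_hypercliques m N f"
  unfolding weak_hypercliques_def weak_hyperclique_def by auto

lemma parity_determines_own_term:
  assumes "weak_hyperclique m N f J" "j \<in> J"
    and side: "\<forall>i\<in>N j. x i = y i"
    and parity: "odd (\<Sum>i\<in>J. if P i (x (f i)) then 1 else 0 :: nat)
                 = odd (\<Sum>i\<in>J. if P i (y (f i)) then 1 else 0 :: nat)"
  shows "P j (x (f j)) = P j (y (f j))"
proof -
  have "finite J" using assms(1) finite_subset unfolding weak_hyperclique_def by blast
  let ?t = "\<lambda>x i. if P i (x (f i)) then 1 else 0 :: nat"
  have others: "(\<Sum>i\<in>J-{j}. ?t x i) = (\<Sum>i\<in>J-{j}. ?t y i)"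
  proof (rule sum.cong)
    fix i assume "i \<in> J - {j}"
    then have "f i \<in> N j" using assms(1,2) unfolding weak_hyperclique_def by auto
    thus "?t x i = ?t y i" using side by simp
  qed simp
  have "odd (?t x j + (\<Sum>i\<in>J-{j}. ?t y i)) = odd (?t y j + (\<Sum>i\<in>J-{j}. ?t y i))"
    using parity others sum.remove[OF \<open>finite J\<close> \<open>j \<in> J\<close>, of "?t x"]
      sum.remove[OF \<open>finite J\<close> \<open>j \<in> J\<close>, of "?t y"] by simp
  thus ?thesis by (simp split: if_splits)
qed

lemma exists_labelling_onto_lessThan:
  assumes "finite A" "b \<le> card A"
  shows "\<exists>c. \<forall>q<b. \<exists>a\<in>A. c a = q"
proof -
  obtain g where g: "g ` {..<b} \<subseteq> A" "inj_on g {..<b}"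
    using card_le_inj[of "{..<b}" A] assms by auto
  have "\<forall>q<b. inv_into {..<b} g (g q) = q \<and> g q \<in> A" using g by auto
  thus ?thesis by blast
qed

lemma beta_le_multicover_weight:
  fixes k :: "nat set \<Rightarrow> nat"
  assumes "b \<ge> 1" and Cl: "Cl \<subseteq> weak_hypercliques m N f" "finite Cl"
    and cov: "\<forall>i<m. b \<le> (\<Sum>J\<in>{J\<in>Cl. i \<in> J}. k J)"
  shows "beta n m N f \<le> real (\<Sum>J\<in>Cl. k J) / real b"
proof -
  define Dom where "Dom = Sigma Cl (\<lambda>J. {..<k J})"
  define slots where "slots i = Sigma {J\<in>Cl. i \<in> J} (\<lambda>J. {..<k J})" for i
  have "\<exists>c. \<forall>q<b. \<exists>a\<in>slots i. c a = q" if "i < m" for i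
  proof (rule exists_labelling_onto_lessThan)
    show "finite (slots i)" unfolding slots_def using Cl(2) by auto
    show "b \<le> card (slots i)" unfolding slots_def using cov \<open>i < m\<close> Cl(2) by simp
  qed
  then obtain c where c: "\<And>i q. i < m \<Longrightarrow> q < b \<Longrightarrow> \<exists>a\<in>slots i. c i a = q"
    by metis
  define C where "C = (\<lambda>x :: nat \<Rightarrow> nat. {(J, r) \<in> Dom.
                   odd (\<Sum>i\<in>J. if bit (x (f i)) (c i (J, r)) then 1 else 0 :: nat)})"
  have "beta_t n m N f b \<le> card Dom"
  proof (rule beta_t_le_card_if_decodable_set_code[where C = C])
    show "\<forall>j<m. \<forall>x\<in>msgs n b. \<forall>y\<in>msgs n b.
            C x = C y \<and> (\<forall>i\<in>N j. x i = y i) \<longrightarrow> x (f j) = y (f j)"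
    proof (intro allI impI ballI, elim conjE)
      fix j x y
      assume j: "j < m" and msgs: "x \<in> msgs n b" "y \<in> msgs n b"
        and "C x = C y" and side: "\<forall>i\<in>N j. x i = y i"
      have bounded: "z i < 2 ^ b" if "z \<in> msgs n b" for z i
        using that unfolding msgs_def by (cases "i < n") auto
      show "x (f j) = y (f j)"
      proof (rule nat_eq_if_low_bits_eq[OF bounded[OF msgs(1)] bounded[OF msgs(2)]], intro allI impI)
        fix q assume "q < b"
        then obtain J r where J: "J \<in> Cl" "j \<in> J" "r < k J" "c j (J, r) = q"
          using c j unfolding slots_def by blast
        then have "(J, r) \<in> Dom" unfolding Dom_def by auto
        with \<open>C x = C y\<close> have parity: "odd (\<Sum>i\<in>J. if bit (x (f i)) (c i (J, r)) then 1 else 0 :: nat)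
            = odd (\<Sum>i\<in>J. if bit (y (f i)) (c i (J, r)) then 1 else 0 :: nat)"
          unfolding C_def by blast
        have "weak_hyperclique m N f J"
          using Cl(1) J(1) unfolding weak_hypercliques_def by auto
        from parity_determines_own_term[OF this J(2) side parity]
        show "bit (x (f j)) q = bit (y (f j)) q"
          using J(4) by simp
      qed
    qed
  qed (use Cl(2) C_def Dom_def in auto)
  then have "real (beta_t n m N f b) / real b \<le> real (card Dom) / real b"
    by (simp add: divide_right_mono)
  also have "card Dom = (\<Sum>J\<in>Cl. k J)" unfolding Dom_def using Cl(2) by simp
  finally show ?thesis using beta_le_beta_t_div[OF \<open>b \<ge> 1\<close>, of n m N f] by linarith
qed

lemma beta_le_frac_cover_weight_plus:
  assumes w: "frac_whc_cover m N f w" and "b \<ge> 1"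
  defines "W \<equiv> weak_hypercliques m N f"
  shows "beta n m N f \<le> (\<Sum>J\<in>W. w J) + real (card W) / real b"
proof -
  have w_nonneg: "\<And>J. J \<in> W \<Longrightarrow> w J \<ge> 0"
    and w_cov: "\<And>j. j < m \<Longrightarrow> (\<Sum>J\<in>{J\<in>W. j \<in> J}. w J) \<ge> 1"
    using w unfolding frac_whc_cover_def W_def by auto
  define k where "k = (\<lambda>J. nat \<lceil>real b * w J\<rceil>)"
  have k_ge: "real b * w J \<le> real (k J)" if "J \<in> W" for J
    unfolding k_def using w_nonneg[OF that] by linarith
  have k_le: "real (k J) \<le> real b * w J + 1" if "J \<in> W" for J
    unfolding k_def using w_nonneg[OF that] of_int_ceiling_le_add_one[of "real b * w J"] by simp
  have "b \<le> (\<Sum>J\<in>{J\<in>W. i \<in> J}. k J)" if "i < m" for i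
  proof -
    have "real b \<le> real b * (\<Sum>J\<in>{J\<in>W. i \<in> J}. w J)"
      using mult_left_mono[OF w_cov[OF that], of "real b"] by simp
    also have "\<dots> = (\<Sum>J\<in>{J\<in>W. i \<in> J}. real b * w J)" by (simp add: sum_distrib_left)
    also have "\<dots> \<le> (\<Sum>J\<in>{J\<in>W. i \<in> J}. real (k J))" by (rule sum_mono) (use k_ge in auto)
    finally show ?thesis by (simp flip: of_nat_sum)
  qed
  then have "beta n m N f \<le> real (\<Sum>J\<in>W. k J) / real b"
    using beta_le_multicover_weight[OF \<open>b \<ge> 1\<close>] finite_weak_hypercliques unfolding W_def by blast
  also have "\<dots> \<le> (real b * (\<Sum>J\<in>W. w J) + real (card W)) / real b"
  proof (rule divide_right_mono)
    have "real (\<Sum>J\<in>W. k J) \<le> (\<Sum>J\<in>W. real b * w J + 1)"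
      unfolding of_nat_sum by (rule sum_mono) (use k_le in auto)
    thus "real (\<Sum>J\<in>W. k J) \<le> real b * (\<Sum>J\<in>W. w J) + real (card W)"
      by (simp add: sum.distrib sum_distrib_left)
  qed simp
  also have "\<dots> = (\<Sum>J\<in>W. w J) + real (card W) / real b"
    using \<open>b \<ge> 1\<close> by (simp add: field_simps)
  finally show ?thesis .
qed

lemma le_of_le_add_div_nat_all:
  fixes x s K :: real
  assumes "\<And>b :: nat. b \<ge> 1 \<Longrightarrow> x \<le> s + K / real b"
  shows "x \<le> s"
proof (rule ccontr)
  assume "\<not> x \<le> s"
  define b where "b = nat \<lceil>K / (x - s)\<rceil> + 1"
  have "b \<ge> 1" and "K / (x - s) < real b" unfolding b_def by linarith+
  then have "K / real b < x - s" using \<open>\<not> x \<le> s\<close> by (simp add: field_simps)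
  with assms[OF \<open>b \<ge> 1\<close>] show False by linarith
qed

lemma frac_whc_cover_const_one: "frac_whc_cover m N f (\<lambda>_. 1)"
  unfolding frac_whc_cover_def
proof (intro conjI ballI allI impI)
  fix j assume "j < m"
  have "{j} \<in> {J\<in>weak_hypercliques m N f. j \<in> J}"
    using singleton_weak_hyperclique[OF \<open>j < m\<close>] by simp
  moreover have "finite {J\<in>weak_hypercliques m N f. j \<in> J}"
    using finite_weak_hypercliques by simp
  ultimately show "1 \<le> (\<Sum>J\<in>{J\<in>weak_hypercliques m N f. j \<in> J}. 1 :: real)"
    by (simp add: Suc_le_eq card_gt_0_iff) blast
qed simp

theorem lemma3p3:
  assumes "dir_hypergraph n m N f"
  shows "beta n m N f \<le> psi_f n m N f"
  unfolding psi_f_def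
proof (rule cInf_greatest)
  show "{\<Sum>J\<in>weak_hypercliques m N f. w J | w. frac_whc_cover m N f w} \<noteq> {}"
    using frac_whc_cover_const_one by blast
next
  fix s assume "s \<in> {\<Sum>J\<in>weak_hypercliques m N f. w J | w. frac_whc_cover m N f w}"
  then obtain w where "frac_whc_cover m N f w" "s = (\<Sum>J\<in>weak_hypercliques m N f. w J)"
    by blast
  thus "beta n m N f \<le> s"
    using le_of_le_add_div_nat_all beta_le_frac_cover_weight_plus by metis
qed

end
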